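(* For any time warp $f$, $n\in\omega\setminus\{0\}$, and $m\in\omega$: $f^{\ell}(n)=m\iff f(m-1)<n\le f(m)$; $f^{\ell}(n)=\omega\iff f(\omega)<n$; $f^{\ell}(\omega)=m\iff f(m)=\omega$ and $f^{\ell}(k)=m$ for some $k\in\omega$; $f^{\ell}(\omega)=\omega\iff f(\omega)<\omega$ or ($f(\omega)=\omega$ and $f(k)<\omega$ for all $k\in\omega$).
   Context: Let $\overline{\omega}=\omega\cup\{\omega\}$ be the natural numbers with a top element $\omega$ adjoined, with its natural total order. A time warp is a monotone map $f\colon\overline{\omega}\to\overline{\omega}$ with $f(0)=0$ and $f(\omega)=\bigvee\{f(n)\mid n\in\omega\}$. The set $W$ of time warps is ordered pointwise and $fg:=f\circ g$; $\mathrm{id}$ is the identity. The right residual $/$ is the binary operation on $W$ with $f\le h/g\iff fg\le h$ for all $f,g,h\in W$. Define $f^{\ell}:=\mathrm{id}/f$. *)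

theory Defs
  imports Main "HOL-Library.Extended_Nat"
begin

text \<open>The ordinal omega+1 (naturals with a top element) is modelled by enat,
  with \<infinity> playing the role of omega.\<close>

definition time_warp :: "(enat \<Rightarrow> enat) \<Rightarrow> bool" where
  "time_warp f \<longleftrightarrow> mono f \<and> f 0 = 0 \<and> f \<infinity> = (SUP n. f (enat n))"

definition rres :: "(enat \<Rightarrow> enat) \<Rightarrow> (enat \<Rightarrow> enat) \<Rightarrow> (enat \<Rightarrow> enat)" where
  "rres h g = (THE r. time_warp r \<and> (\<forall>f. time_warp f \<longrightarrow> (f \<le> r \<longleftrightarrow> f \<circ> g \<le> h)))"

definition lres :: "(enat \<Rightarrow> enat) \<Rightarrow> (enat \<Rightarrow> enat)" where
  "lres f = rres id f"

end

theory Submission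
  imports Defs
begin

text \<open>The residual f^l is the lower adjoint of f: f^l(y) is the least x with y \<le> f x.
  Because \<omega>+1 is well-ordered this least element exists whenever some x works, which yields
  the Galois connection f^l(y) \<le> k \<longleftrightarrow> y \<le> f k for finite k. The lower adjoint is again a
  time warp and is therefore the residual id/f. All four equivalences are then read off the
  Galois connection.\<close>

lemma enat_le_by_finite_bounds:
  fixes a b :: enat
  assumes "\<And>k. enat k < a \<Longrightarrow> enat k < b"
  shows "a \<le> b"
  using assms by (cases b) (auto simp: not_le[symmetric])

lemma SUP_less_enat_iff: "(SUP i. g i) < enat n \<longleftrightarrow> (\<forall>i. g i < enat n)"
proof (cases n)
  case (Suc p)
  then have "x < enat n \<longleftrightarrow> x \<le> enat p" for x :: enat
    by (cases x) auto
  then show ?thesis by (simp add: SUP_le_iff)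
qed (auto simp: zero_enat_def[symmetric])

definition lower_adjoint :: "(enat \<Rightarrow> enat) \<Rightarrow> enat \<Rightarrow> enat" where
  "lower_adjoint f y = Inf {x. y \<le> f x}"

lemma lower_adjoint_le: "y \<le> f x \<Longrightarrow> lower_adjoint f y \<le> x"
  unfolding lower_adjoint_def by (rule Inf_lower) simp

lemma le_at_lower_adjoint: "y \<le> f x \<Longrightarrow> y \<le> f (lower_adjoint f y)"
  unfolding lower_adjoint_def Inf_enat_def by (auto intro: LeastI)

lemma lower_adjoint_le_enat_iff:
  assumes "mono f"
  shows "lower_adjoint f y \<le> enat k \<longleftrightarrow> y \<le> f (enat k)"
proof
  assume le: "lower_adjoint f y \<le> enat k"
  have "\<exists>x. y \<le> f x"
  proof (rule ccontr)
    assume "\<nexists>x. y \<le> f x"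
    then have "lower_adjoint f y = \<infinity>"
      by (simp add: lower_adjoint_def top_enat_def[symmetric])
    with le show False by simp
  qed
  then have "y \<le> f (lower_adjoint f y)"
    using le_at_lower_adjoint by blast
  also have "\<dots> \<le> f (enat k)"
    using le by (rule monoD[OF assms])
  finally show "y \<le> f (enat k)" .
qed (rule lower_adjoint_le)

lemma lower_adjoint_eq_infinity_iff:
  assumes "mono f"
  shows "lower_adjoint f y = \<infinity> \<longleftrightarrow> (\<forall>k. f (enat k) < y)"
proof -
  have "lower_adjoint f y = \<infinity> \<longleftrightarrow> (\<forall>k. \<not> lower_adjoint f y \<le> enat k)"
    by (cases "lower_adjoint f y") auto
  then show ?thesis
    by (simp add: lower_adjoint_le_enat_iff[OF assms] not_le)
qed

lemma lower_adjoint_eq_enat_iff: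
  assumes "mono f"
  shows "lower_adjoint f y = enat m \<longleftrightarrow>
           (0 < m \<longrightarrow> f (enat (m - 1)) < y) \<and> y \<le> f (enat m)"
proof -
  have "lower_adjoint f y = enat m \<longleftrightarrow>
          (0 < m \<longrightarrow> \<not> lower_adjoint f y \<le> enat (m - 1)) \<and> lower_adjoint f y \<le> enat m"
    by (cases "lower_adjoint f y") auto
  then show ?thesis
    by (simp add: lower_adjoint_le_enat_iff[OF assms] not_le)
qed

lemma mono_lower_adjoint: "mono (lower_adjoint f)"
  unfolding lower_adjoint_def by (rule monoI, rule Inf_superset_mono) (auto intro: order_trans)

lemma lower_adjoint_zero [simp]: "lower_adjoint f 0 = 0"
  using lower_adjoint_le[of 0 f 0] by simp

lemma lower_adjoint_infinity_eq_SUP: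
  assumes "mono f"
  shows "lower_adjoint f \<infinity> = (SUP n. lower_adjoint f (enat n))"
proof (rule antisym)
  show "lower_adjoint f \<infinity> \<le> (SUP n. lower_adjoint f (enat n))"
  proof (rule enat_le_by_finite_bounds)
    fix k assume "enat k < lower_adjoint f \<infinity>"
    then obtain c where c: "f (enat k) = enat c"
      using lower_adjoint_le[of \<infinity> f "enat k"] by (cases "f (enat k)") auto
    \<comment> \<open>the first stage at which f exceeds f k lies beyond k\<close>
    have "enat k < lower_adjoint f (enat (Suc c))"
      using lower_adjoint_le_enat_iff[OF assms] c by (simp add: not_le[symmetric])
    also have "\<dots> \<le> (SUP n. lower_adjoint f (enat n))"
      by (rule SUP_upper) simp
    finally show "enat k < (SUP n. lower_adjoint f (enat n))" .
  qed
  show "(SUP n. lower_adjoint f (enat n)) \<le> lower_adjoint f \<infinity>"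
    by (rule SUP_least) (simp add: monoD[OF mono_lower_adjoint])
qed

lemma time_warp_lower_adjoint: "mono f \<Longrightarrow> time_warp (lower_adjoint f)"
  by (simp add: time_warp_def mono_lower_adjoint lower_adjoint_infinity_eq_SUP)

lemma le_lower_adjoint_iff:
  assumes "mono f" and "mono g"
  shows "g \<le> lower_adjoint f \<longleftrightarrow> g \<circ> f \<le> id"
proof
  assume "g \<le> lower_adjoint f"
  then show "g \<circ> f \<le> id"
    by (auto simp: le_fun_def intro: order_trans lower_adjoint_le)
next
  assume gf: "g \<circ> f \<le> id"
  have "g y \<le> lower_adjoint f y" for y
  proof (cases "lower_adjoint f y")
    case (enat k)
    then have "lower_adjoint f y \<le> enat k"
      by simp
    then have "y \<le> f (enat k)"
      using lower_adjoint_le_enat_iff[OF assms(1)] by blast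
    then have "g y \<le> g (f (enat k))"
      by (rule monoD[OF assms(2)])
    also have "\<dots> \<le> enat k"
      using gf by (simp add: le_fun_def)
    finally show ?thesis using enat by simp
  qed simp
  then show "g \<le> lower_adjoint f"
    by (simp add: le_fun_def)
qed

lemma rres_eqI:
  assumes "time_warp r" and "\<And>f. time_warp f \<Longrightarrow> f \<le> r \<longleftrightarrow> f \<circ> g \<le> h"
  shows "rres h g = r"
  unfolding rres_def
proof (rule the_equality)
  fix r' assume r': "time_warp r' \<and> (\<forall>f. time_warp f \<longrightarrow> (f \<le> r' \<longleftrightarrow> f \<circ> g \<le> h))"
  have "r' \<le> r" using assms r' by blast
  moreover have "r \<le> r'" using assms r' by blast
  ultimately show "r' = r" by simp
qed (use assms in blast)

lemma lres_eq_lower_adjoint: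
  assumes "mono f"
  shows "lres f = lower_adjoint f"
  unfolding lres_def
  using assms by (intro rres_eqI time_warp_lower_adjoint le_lower_adjoint_iff) (auto simp: time_warp_def)

lemma lower_adjoint_enat_eq_infinity_iff:
  assumes "time_warp f"
  shows "lower_adjoint f (enat n) = \<infinity> \<longleftrightarrow> f \<infinity> < enat n"
  using assms
  by (simp add: time_warp_def lower_adjoint_eq_infinity_iff SUP_less_enat_iff)

lemma lower_adjoint_infinity_eq_enat_iff:
  assumes "mono f"
  shows "lower_adjoint f \<infinity> = enat m \<longleftrightarrow>
           f (enat m) = \<infinity> \<and> (\<exists>k. lower_adjoint f (enat k) = enat m)"
proof -
  have reached_iff: "(\<exists>k. lower_adjoint f (enat k) = enat m) \<longleftrightarrow>
                       (0 < m \<longrightarrow> f (enat (m - 1)) < \<infinity>)" if top: "f (enat m) = \<infinity>"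
  proof
    assume before: "0 < m \<longrightarrow> f (enat (m - 1)) < \<infinity>"
    show "\<exists>k. lower_adjoint f (enat k) = enat m"
    proof (cases "m = 0")
      case True
      then show ?thesis by (metis lower_adjoint_zero zero_enat_def)
    next
      case False
      then obtain c where "f (enat (m - 1)) = enat c"
        using before by auto
      then have "lower_adjoint f (enat (Suc c)) = enat m"
        using top by (simp add: lower_adjoint_eq_enat_iff[OF assms])
      then show ?thesis ..
    qed
  qed (auto simp: lower_adjoint_eq_enat_iff[OF assms] elim: less_enatE)
  have "lower_adjoint f \<infinity> = enat m \<longleftrightarrow>
          f (enat m) = \<infinity> \<and> (0 < m \<longrightarrow> f (enat (m - 1)) < \<infinity>)"
    by (auto simp: lower_adjoint_eq_enat_iff[OF assms])
  with reached_iff show ?thesis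
    by metis
qed

theorem lemma2p7:
  fixes f :: "enat \<Rightarrow> enat" and n m :: nat
  assumes "time_warp f" and "n \<noteq> 0"
  shows "(lres f (enat n) = enat m \<longleftrightarrow>
            ((0 < m \<longrightarrow> f (enat (m - 1)) < enat n) \<and> enat n \<le> f (enat m)))
       \<and> (lres f (enat n) = \<infinity> \<longleftrightarrow> f \<infinity> < enat n)
       \<and> (lres f \<infinity> = enat m \<longleftrightarrow>
            (f (enat m) = \<infinity> \<and> (\<exists>k::nat. lres f (enat k) = enat m)))
       \<and> (lres f \<infinity> = \<infinity> \<longleftrightarrow>
            (f \<infinity> < \<infinity> \<or> (f \<infinity> = \<infinity> \<and> (\<forall>k::nat. f (enat k) < \<infinity>))))"
proof -
  have mono: "mono f"
    using assms(1) by (simp add: time_warp_def)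
  have "f (enat k) < \<infinity>" if "f \<infinity> < \<infinity>" for k
  proof -
    have "f (enat k) \<le> f \<infinity>"
      by (simp add: monoD[OF mono])
    then show ?thesis
      using that by (rule le_less_trans)
  qed
  then have finite_values_iff:
    "(\<forall>k. f (enat k) < \<infinity>) \<longleftrightarrow> f \<infinity> < \<infinity> \<or> (f \<infinity> = \<infinity> \<and> (\<forall>k. f (enat k) < \<infinity>))"
    by (cases "f \<infinity> = \<infinity>") auto
  show ?thesis
    unfolding lres_eq_lower_adjoint[OF mono]
    using lower_adjoint_eq_enat_iff[OF mono] lower_adjoint_enat_eq_infinity_iff[OF assms(1)]
      lower_adjoint_infinity_eq_enat_iff[OF mono] lower_adjoint_eq_infinity_iff[OF mono, of \<infinity>]
      finite_values_iff
    by blast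
qed

end
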